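(* Let $p\in(0,1)$, $d\ge2$ an integer, and $\psi(v)=-\frac{p}{d-p}\ln(v)-\ln(1+pv)$, so that $\mathrm{Re}\,\psi(v)=-\frac{p}{d-p}\ln|v|-\ln|1+pv|$. For each $v$ write the $d$ roots (with multiplicity) of $u(1+u)^{d-1}=v(1+v)^{d-1}$ as $v,u_1(v),\dots,u_{d-1}(v)$, where $u_1$ is the non-trivial solution with $u_1(-1/d)=-1/d$ and $u_2(v),\dots,u_{d-1}(v)$ are the other non-trivial solutions. Then there exists a path $\Gamma_0$ encircling the origin and passing through $v=-1/d$ such that $$\mathrm{Re}\,\psi(v)-\mathrm{Re}\,\psi(u_i(v))<0$$ for all $v\in\Gamma_0$ and $i=1,\dots,d-1$, except for the solution $u_1(v)$ at the point $v=-1/d$. *)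

theory Defs
  imports "HOL-Complex_Analysis.Complex_Analysis" "HOL-Computational_Algebra.Fundamental_Theorem_Algebra"
    "HOL-Library.Extended_Real"
begin

definition eln :: "real \<Rightarrow> ereal" where
  "eln x = (if x = 0 then -\<infinity> else ereal (ln x))"

text \<open>Real part of psi(v) = -(p/(d-p)) Ln v - Ln (1 + p v), as an extended real
  (value +infinity at v = 0 and at v = -1/p).\<close>
definition RePsi :: "real \<Rightarrow> nat \<Rightarrow> complex \<Rightarrow> ereal" where
  "RePsi p d v = - (ereal (p / (real d - p)) * eln (cmod v)) - eln (cmod (1 + of_real p * v))"

definition Fpoly :: "nat \<Rightarrow> complex \<Rightarrow> complex poly" where
  "Fpoly d v = [:0, 1:] * [:1, 1:] ^ (d - 1) - [: v * (1 + v) ^ (d - 1) :]"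

definition nontriv_roots :: "nat \<Rightarrow> complex \<Rightarrow> complex multiset" where
  "nontriv_roots d v = proots (Fpoly d v) - {# v #}"

end

theory Submission
  imports Defs
begin

(* Take for \<Gamma>0 the circle |v| = 1/d.  If u \<noteq> v is another root with |u| \<le> |v|, then
   s = (1+v)/(1+u) satisfies |s| \<le> 1, s \<noteq> 1 and v (1 + s + ... + s^(d-1)) = -1, which is
   impossible because the sum has modulus < d.  So every non-trivial root lies strictly outside
   the circle; at v = -1/d the root v itself is double, which is why one copy is discarded.
   To compare Re psi, move along the level set |w|^2 |1+w|^(2(d-1)) = K through u and v, with
   parameter y = |1+w|^2.  There |1+pw|^2 = 1 - p + p y - p (1-p) K / y^(d-1), and
   2 Re psi(w) = -(p/(d-p)) ln K - phi(y) with phi(y) = ln |1+pw|^2 - (p(d-1)/(d-p)) ln y.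
   By a weighted AM-GM inequality phi' > 0 between |1+u|^2 and |1+v|^2, and |u| > |v| forces
   |1+u| < |1+v|. *)

lemma Fpoly_nonzero: "Fpoly d v \<noteq> 0"
proof
  assume "Fpoly d v = 0"
  then have "poly (Fpoly d v) 1 - poly (Fpoly d v) 0 = 0" by simp
  then show False by (simp add: Fpoly_def)
qed

lemma pderiv_Fpoly:
  assumes "2 \<le> d"
  shows "pderiv (Fpoly d v) = [:1, 1:] ^ (d - 2) * [:1, of_nat d:]"
proof -
  obtain m where d: "d = Suc (Suc m)" using assms by (metis add_2_eq_Suc le_Suc_ex)
  have "pderiv (Fpoly d v) = [:0, 1:] * smult (of_nat (Suc m)) ([:1, 1:] ^ m) + [:1, 1:] ^ Suc m"
    by (simp add: d Fpoly_def pderiv_mult pderiv_power_Suc pderiv_pCons pderiv_diff del: power_Suc)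
  also have "\<dots> = [:1, 1:] ^ m * ([:0, of_nat (Suc m):] + [:1, 1:])"
    by (simp add: algebra_simps smult_add_left del: of_nat_Suc)
  also have "[:0, of_nat (Suc m):] + [:1, 1:] = [:1, of_nat d:]"
    by (simp add: d add_ac)
  finally show ?thesis by (simp add: d)
qed

lemma order_Fpoly:
  fixes v :: complex
  assumes d: "2 \<le> d" and v: "v \<noteq> -1"
  shows "order v (Fpoly d v) = (if v = complex_of_real (- 1 / real d) then 2 else 1)"
proof -
  have "order v (Fpoly d v) = Suc (order v (pderiv (Fpoly d v)))"
    by (rule order_pderiv) (simp_all add: Fpoly_nonzero Fpoly_def)
  also have "order v (pderiv (Fpoly d v)) = order v ([:1, 1:] ^ (d - 2)) + order v [:1, of_nat d:]"
    unfolding pderiv_Fpoly[OF d] by (rule order_mult) (simp del: mult_pCons_right mult_pCons_left)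
  also have "order v ([:1, 1:] ^ (d - 2)) = 0"
    using v by (intro order_0I) (auto simp: add_eq_0_iff)
  also have "order v [:1, of_nat d:] = (if v = complex_of_real (- 1 / real d) then 1 else 0)"
  proof (cases "v = complex_of_real (- 1 / real d)")
    case True
    then have "poly [:1, of_nat d:] v = 0" using d by (simp add: field_simps)
    then have "0 < order v [:1, of_nat d:]" using d by (intro order_gt_0_iff[THEN iffD2]) auto
    moreover have "order v [:1, of_nat d:] \<le> 1"
      using order_degree[of "[:1, of_nat d:]" v] d by simp
    ultimately show ?thesis using True by simp
  next
    case False
    then have "poly [:1, of_nat d:] v \<noteq> 0" using d by (auto simp: field_simps add_eq_0_iff)
    then show ?thesis using False by (simp add: order_0I)
  qed
  finally show ?thesis by simp
qed

lemma in_nontriv_roots_diffD: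
  fixes u v :: complex
  assumes d: "2 \<le> d" and v: "v \<noteq> -1"
    and u: "u \<in># nontriv_roots d v - (if v = complex_of_real (- 1 / real d) then {#v#} else {#})"
  shows "u \<noteq> v" and "u * (1 + u) ^ (d - 1) = v * (1 + v) ^ (d - 1)"
proof -
  define E where "E = (if v = complex_of_real (- 1 / real d) then {#v#} else {#})"
  have count: "0 < order u (Fpoly d v) - count {#v#} u - count E u"
    using u unfolding E_def[symmetric]
    by (simp only: nontriv_roots_def count_diff count_proots[OF Fpoly_nonzero]
        count_greater_zero_iff[symmetric])
  show "u \<noteq> v"
  proof
    assume "u = v"
    with count show False using order_Fpoly[OF d v] by (simp add: E_def)
  qed
  from count have "0 < order u (Fpoly d v)" by simp
  then have "poly (Fpoly d v) u = 0" using order_gt_0_iff Fpoly_nonzero by blast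
  then show "u * (1 + u) ^ (d - 1) = v * (1 + v) ^ (d - 1)" by (simp add: Fpoly_def)
qed

lemma norm_one_plus_less_2:
  fixes s :: complex
  assumes "cmod s \<le> 1" and "s \<noteq> 1"
  shows "cmod (1 + s) < 2"
proof -
  have "cmod (1 + s) \<le> 1 + cmod s" using norm_triangle_ineq[of 1 s] by simp
  moreover have "cmod (1 + s) \<noteq> 1 + cmod s \<or> cmod s \<noteq> 1"
    using norm_triangle_eq[of 1 s] \<open>s \<noteq> 1\<close> by auto
  ultimately show ?thesis using \<open>cmod s \<le> 1\<close> by linarith
qed

lemma norm_sum_power_less:
  fixes s :: complex
  assumes "2 \<le> d" and s: "cmod s \<le> 1" "s \<noteq> 1"
  shows "cmod (\<Sum>i<d. s ^ i) < d"
  using \<open>2 \<le> d\<close>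
proof (induction d rule: nat_induct_at_least)
  case base
  show ?case using norm_one_plus_less_2[OF s] by (simp add: numeral_2_eq_2)
next
  case (Suc d)
  have "cmod (\<Sum>i<Suc d. s ^ i) \<le> cmod (\<Sum>i<d. s ^ i) + cmod s ^ d"
    by (metis sum.lessThan_Suc norm_triangle_ineq norm_power)
  moreover have "cmod s ^ d \<le> 1" by (simp add: s power_le_one)
  ultimately show ?case using Suc.IH by simp
qed

lemma root_ratio_geometric_sum:
  fixes u v :: complex
  assumes root: "u * (1 + u) ^ n = v * (1 + v) ^ n" and "1 + u \<noteq> 0" and "u \<noteq> v"
  shows "v * (\<Sum>i<Suc n. ((1 + v) / (1 + u)) ^ i) = -1"
proof -
  define s where "s = (1 + v) / (1 + u)"
  have "s \<noteq> 1" using \<open>1 + u \<noteq> 0\<close> \<open>u \<noteq> v\<close> by (auto simp: s_def)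
  have v: "1 + v = s * (1 + u)" using \<open>1 + u \<noteq> 0\<close> by (simp add: s_def)
  have "u * (1 + u) ^ n = (v * s ^ n) * (1 + u) ^ n"
    using root by (simp add: v power_mult_distrib)
  then have u: "u = v * s ^ n" using \<open>1 + u \<noteq> 0\<close> by simp
  have "(1 - s) * (v * (\<Sum>i<Suc n. s ^ i)) = v * (1 - s ^ Suc n)"
    unfolding one_diff_power_eq by (rule mult.left_commute)
  also have "\<dots> = (1 - s) * -1"
    using u v by (simp add: algebra_simps)
  finally have "v * (\<Sum>i<Suc n. s ^ i) = -1"
    using \<open>s \<noteq> 1\<close> by (subst (asm) mult_left_cancel) auto
  then show ?thesis by (simp only: s_def)
qed

lemma norm_less_nontrivial_root:
  fixes u v :: complex
  assumes d: "2 \<le> d" and v: "cmod v \<le> 1 / d"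
    and root: "u * (1 + u) ^ (d - 1) = v * (1 + v) ^ (d - 1)" and "u \<noteq> v"
  shows "cmod v < cmod u"
proof (rule ccontr)
  assume "\<not> cmod v < cmod u"
  then have le: "cmod u \<le> cmod v" by simp
  have "v \<noteq> 0" using le \<open>u \<noteq> v\<close> by auto
  have "1 / real d < 1" using d by simp
  then have "cmod v < 1" "cmod u < 1" using v le by linarith+
  then have "1 + u \<noteq> 0" by (auto simp: add_eq_0_iff)
  have "cmod u * cmod (1 + u) ^ (d - 1) = cmod v * cmod (1 + v) ^ (d - 1)"
    using arg_cong[OF root, of cmod] by (simp add: norm_mult norm_power)
  then have "cmod v * cmod (1 + v) ^ (d - 1) \<le> cmod v * cmod (1 + u) ^ (d - 1)"
    using le by (metis mult_right_mono norm_ge_zero zero_le_power)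
  then have "cmod (1 + v) ^ Suc (d - 2) \<le> cmod (1 + u) ^ Suc (d - 2)"
    using \<open>v \<noteq> 0\<close> d by (simp add: Suc_diff_Suc numeral_2_eq_2)
  then have "cmod (1 + v) \<le> cmod (1 + u)" by (rule power_le_imp_le_base) simp
  define s where "s = (1 + v) / (1 + u)"
  have "cmod s \<le> 1" "s \<noteq> 1"
    using \<open>cmod (1 + v) \<le> cmod (1 + u)\<close> \<open>1 + u \<noteq> 0\<close> \<open>u \<noteq> v\<close>
    by (auto simp: s_def norm_divide)
  have "v * (\<Sum>i<d. s ^ i) = -1"
    using root_ratio_geometric_sum[OF root \<open>1 + u \<noteq> 0\<close> \<open>u \<noteq> v\<close>] d by (simp add: s_def)
  then have "cmod v * cmod (\<Sum>i<d. s ^ i) = 1" by (metis norm_minus_cancel norm_mult norm_one)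
  moreover have "cmod v * cmod (\<Sum>i<d. s ^ i) < 1 / d * d"
    using norm_sum_power_less[OF d \<open>cmod s \<le> 1\<close> \<open>s \<noteq> 1\<close>] v \<open>v \<noteq> 0\<close>
    by (intro mult_le_less_imp_less) auto
  ultimately show False using d by simp
qed

lemma ln_less_minus_one:
  fixes x :: real
  assumes "0 < x" and "x \<noteq> 1"
  shows "ln x < x - 1"
  using ln_le_minus_one[OF \<open>0 < x\<close>] ln_eq_minus_one[OF \<open>0 < x\<close>] \<open>x \<noteq> 1\<close> by fastforce

lemma mult_power_less_mean_power:
  fixes x w :: real
  assumes "0 < x" "0 < w" "x \<noteq> w" "1 \<le> n"
  shows "x * w ^ n < ((x + n * w) / (real n + 1)) ^ (n + 1)"
proof -
  define A where "A = (x + n * w) / (real n + 1)"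
  have "0 < A" using assms by (simp add: A_def add_pos_nonneg)
  have "x \<noteq> A" using assms by (auto simp: A_def field_simps)
  have "ln (x * w ^ n) - ln (A ^ (n + 1)) = ln (x / A) + n * ln (w / A)"
    using assms \<open>0 < A\<close> by (simp add: ln_mult ln_div ln_realpow algebra_simps)
  also have "\<dots> < (x / A - 1) + n * (w / A - 1)"
    using ln_less_minus_one[of "x / A"] ln_le_minus_one[of "w / A"] assms \<open>0 < A\<close> \<open>x \<noteq> A\<close>
    by (intro add_less_le_mono mult_left_mono) auto
  also have "\<dots> = 0"
    using \<open>0 < A\<close> by (simp add: A_def field_simps)
  finally have "x * w ^ n < A ^ (n + 1)"
    using assms \<open>0 < A\<close> by simp
  then show ?thesis by (simp only: A_def)
qed

lemma one_less_by_amgm: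
  fixes x z :: real and n :: nat
  defines "d \<equiv> real n + 1"
  assumes n: "1 \<le> n" and x: "1 / d\<^sup>2 < x" and z: "0 < z"
    and product: "1 / d\<^sup>2 * ((n / d)\<^sup>2) ^ n \<le> x * z ^ n"
  shows "1 < d * z / n + d * x"
proof -
  have "0 < d" by (simp add: d_def)
  have "0 < x" by (rule le_less_trans[OF _ x]) simp
  define w where "w = z / n\<^sup>2"
  have mean: "(x + n * w) / (real n + 1) = (x + z / n) / d"
    by (simp add: w_def d_def power2_eq_square)
  have "1 / d\<^sup>2 < (x + z / n) / d"
  proof (cases "x = w")
    case True
    then have "(x + n * w) / (real n + 1) = x" by (simp add: field_simps)
    then show ?thesis using mean x by simp
  next
    case False
    have "(1 / d\<^sup>2) ^ (n + 1) = 1 / d\<^sup>2 * ((n / d)\<^sup>2) ^ n / (real n)\<^sup>2 ^ n"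
      using n by (simp add: power_divide power_mult_distrib field_simps)
    also have "\<dots> \<le> x * z ^ n / (real n)\<^sup>2 ^ n"
      by (rule divide_right_mono[OF product]) simp
    also have "\<dots> = x * w ^ n"
      by (simp add: w_def power_divide)
    also have "\<dots> < ((x + n * w) / (real n + 1)) ^ (n + 1)"
      using False n z \<open>0 < x\<close> by (intro mult_power_less_mean_power) (auto simp: w_def)
    finally have "(1 / d\<^sup>2) ^ (n + 1) < ((x + z / n) / d) ^ (n + 1)"
      by (simp only: mean)
    then show ?thesis
      by (rule power_less_imp_less_base) (use \<open>0 < x\<close> \<open>0 < d\<close> z in simp)
  qed
  then show ?thesis
    using \<open>0 < d\<close> by (simp add: field_simps power2_eq_square)
qed

lemma level_curve_increasing:
  fixes p K y1 y2 :: real and n :: nat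
  defines "d \<equiv> real n + 1"
    and "Q \<equiv> \<lambda>y. 1 - p + p * y - p * (1 - p) * (K / y ^ n)"
  assumes p: "0 < p" "p < 1" and n: "1 \<le> n" and K: "0 < K"
    and y: "0 < y1" "y1 < y2" and Q1: "0 < Q y1"
    and sign: "\<And>z. y1 < z \<Longrightarrow> z < y2 \<Longrightarrow> 1 < d * z / n + d * (K / z ^ n)"
  shows "ln (Q y1) - p * n / (d - p) * ln y1 < ln (Q y2) - p * n / (d - p) * ln y2"
proof -
  define b where "b = p * n / (d - p)"
  define P where "P y = K / y ^ n" for y
  define Q' where "Q' y = p + p * (1 - p) * (n * K / y ^ (n + 1))" for y
  define \<phi> where "\<phi> y = ln (Q y) - b * ln y" for y
  have "0 < d - p" using p by (simp add: d_def)
  have Q_pos: "0 < Q y" if "y1 \<le> y" for y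
  proof -
    have "K / y ^ n \<le> K / y1 ^ n"
      using that y K by (intro divide_left_mono power_mono mult_pos_pos) auto
    then have "p * (1 - p) * (K / y ^ n) \<le> p * (1 - p) * (K / y1 ^ n)"
      using p by (intro mult_left_mono) auto
    moreover have "p * y1 \<le> p * y" using that p by simp
    ultimately have "Q y1 \<le> Q y" by (simp add: Q_def)
    then show ?thesis using Q1 by simp
  qed
  have Q_deriv: "(Q has_real_derivative Q' y) (at y)" if "0 < y" for y
  proof -
    have "(P has_real_derivative - (n * K / y ^ (n + 1))) (at y)"
      unfolding P_def using that n
      by (auto intro!: derivative_eq_intros) (cases n; simp add: field_simps)
    moreover have "Q = (\<lambda>y. 1 - p + p * y - p * (1 - p) * P y)" by (simp add: Q_def P_def)
    ultimately show ?thesis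
      unfolding Q'_def by (auto intro!: derivative_eq_intros)
  qed
  have \<phi>_deriv: "(\<phi> has_real_derivative Q' y / Q y - b / y) (at y)" if "y1 \<le> y" for y
    unfolding \<phi>_def[abs_def] using that y Q_pos[OF that]
    by (auto intro!: derivative_eq_intros Q_deriv simp: field_simps)
  have \<phi>_deriv_pos: "0 < Q' z / Q z - b / z" if z: "y1 < z" "z < y2" for z
  proof -
    have "0 < z" "0 < Q z" using z y Q_pos[of z] by auto
    define x where "x = K / z ^ n"
    have zQ': "z * Q' z = p * z + p * (1 - p) * n * x"
      using \<open>0 < z\<close> by (simp add: Q'_def x_def field_simps)
    have Qz: "Q z = 1 - p + p * z - p * (1 - p) * x" by (simp add: Q_def x_def)
    have "z * Q' z - b * Q z = p * (1 - p) * n * (d * z / n + d * x - 1) / (d - p)"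
      unfolding zQ' Qz b_def using \<open>0 < d - p\<close> n
      by (simp add: field_simps) (simp add: d_def algebra_simps)
    also have "\<dots> > 0"
      using p n sign[OF z] \<open>0 < d - p\<close> by (simp add: x_def)
    finally have "0 < (z * Q' z - b * Q z) / (z * Q z)"
      using \<open>0 < z\<close> \<open>0 < Q z\<close> by simp
    also have "\<dots> = Q' z / Q z - b / z"
      using \<open>0 < z\<close> \<open>0 < Q z\<close> by (simp add: field_simps)
    finally show ?thesis .
  qed
  have "continuous_on {y1..y2} \<phi>"
    by (rule DERIV_atLeastAtMost_imp_continuous_on) (use \<phi>_deriv in blast)
  then have "\<phi> y1 < \<phi> y2"
    by (rule DERIV_pos_imp_increasing_open[OF \<open>y1 < y2\<close>, rotated])
      (metis \<phi>_deriv \<phi>_deriv_pos less_imp_le)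
  then show ?thesis by (simp add: \<phi>_def b_def)
qed

lemma level_curve_comparison:
  fixes p x1 y1 y2 :: real and n :: nat
  defines "d \<equiv> real n + 1"
  assumes p: "0 < p" "p < 1" and n: "1 \<le> n"
    and y2: "(n / d)\<^sup>2 \<le> y2" and x1: "1 / d\<^sup>2 < x1" and y1: "0 < y1"
    and level: "x1 * y1 ^ n = 1 / d\<^sup>2 * y2 ^ n"
    and Q1: "0 < 1 - p + p * y1 - p * (1 - p) * x1"
  shows "p / (d - p) * ln x1 + ln (1 - p + p * y1 - p * (1 - p) * x1)
       < p / (d - p) * ln (1 / d\<^sup>2) + ln (1 - p + p * y2 - p * (1 - p) * (1 / d\<^sup>2))"
proof -
  define K where "K = x1 * y1 ^ n"
  have "0 < d" by (simp add: d_def)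
  have "0 < x1" by (rule le_less_trans[OF _ x1]) simp
  then have "0 < K" using y1 by (simp add: K_def)
  have "0 < y2" using \<open>0 < d\<close> n by (auto intro: less_le_trans[OF _ y2])
  have K_eq: "K = 1 / d\<^sup>2 * y2 ^ n" unfolding K_def by (rule level)
  have x1_eq: "x1 = K / y1 ^ n" using y1 by (simp add: K_def)
  have x2_eq: "1 / d\<^sup>2 = K / y2 ^ n" using \<open>0 < y2\<close> by (simp add: K_eq)
  have "y1 ^ n = K / x1" using \<open>0 < x1\<close> by (simp add: K_def)
  also have "\<dots> < K / (1 / d\<^sup>2)"
    using x1 \<open>0 < K\<close> \<open>0 < d\<close> \<open>0 < x1\<close> by (intro divide_strict_left_mono) auto
  also have "\<dots> = y2 ^ n" using \<open>0 < d\<close> by (simp add: K_eq)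
  finally have "y1 < y2" using \<open>0 < y2\<close> by (simp add: power_less_imp_less_base)
  have "1 < d * z / n + d * (K / z ^ n)" if "y1 < z" "z < y2" for z
  proof (rule one_less_by_amgm[of n, folded d_def])
    have "0 < z" using that y1 by simp
    have "K / y2 ^ n < K / z ^ n"
      using that n \<open>0 < z\<close> \<open>0 < K\<close> by (intro divide_strict_left_mono power_strict_mono) auto
    then show "1 / d\<^sup>2 < K / z ^ n" by (simp add: x2_eq)
    have "1 / d\<^sup>2 * ((n / d)\<^sup>2) ^ n \<le> 1 / d\<^sup>2 * y2 ^ n"
      using y2 by (intro mult_left_mono power_mono) auto
    then show "1 / d\<^sup>2 * ((n / d)\<^sup>2) ^ n \<le> K / z ^ n * z ^ n"
      using \<open>0 < z\<close> by (simp add: K_eq)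
  qed (use that n y1 in auto)
  then have "ln (1 - p + p * y1 - p * (1 - p) * (K / y1 ^ n)) - p * n / (d - p) * ln y1
           < ln (1 - p + p * y2 - p * (1 - p) * (K / y2 ^ n)) - p * n / (d - p) * ln y2"
    using p n y1 Q1 \<open>0 < K\<close> \<open>y1 < y2\<close> unfolding x1_eq
    by (intro level_curve_increasing[of p n K y1 y2, folded d_def]) auto
  moreover have "ln x1 = ln K - n * ln y1" and "ln (1 / d\<^sup>2) = ln K - n * ln y2"
    using \<open>0 < K\<close> y1 \<open>0 < y2\<close> by (simp_all add: x1_eq x2_eq ln_div ln_realpow)
  then have "p / (d - p) * ln x1 = p / (d - p) * ln K - p * n / (d - p) * ln y1"
    and "p / (d - p) * ln (1 / d\<^sup>2) = p / (d - p) * ln K - p * n / (d - p) * ln y2"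
    by (simp_all add: right_diff_distrib)
  ultimately show ?thesis
    unfolding x1_eq[symmetric] x2_eq[symmetric] by linarith
qed

lemma norm_one_plus_of_real_mult_sq:
  "(cmod (1 + of_real p * w))\<^sup>2 = 1 - p + p * (cmod (1 + w))\<^sup>2 - p * (1 - p) * (cmod w)\<^sup>2"
  unfolding cmod_power2 by (simp add: power2_eq_square algebra_simps)

lemma RePsi_finite:
  assumes "w \<noteq> 0" and "1 + of_real p * w \<noteq> 0"
  shows "RePsi p d w = ereal (- (p / (real d - p) * ln (cmod w)) - ln (cmod (1 + of_real p * w)))"
  using assms by (simp add: RePsi_def eln_def)

lemma RePsi_less_of_norm_less:
  fixes u v :: complex
  assumes p: "0 < p" "p < 1" and d: "2 \<le> d" and v: "cmod v = 1 / d"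
    and root: "u * (1 + u) ^ (d - 1) = v * (1 + v) ^ (d - 1)" and less: "cmod v < cmod u"
  shows "RePsi p d v < RePsi p d u"
proof -
  define n where "n = d - 1"
  have dn: "d = Suc n" and "1 \<le> n" using d by (simp_all add: n_def)
  have d_eq: "real d = real n + 1" by (simp add: dn)
  have "v \<noteq> 0" "u \<noteq> 0" using v d less by auto
  have "cmod v < 1" using v d by simp
  then have "1 + v \<noteq> 0" by (auto simp: add_eq_0_iff)
  have "cmod (of_real p * v) < 1" using v p d by (simp add: norm_mult)
  then have "1 + of_real p * v \<noteq> 0" by (auto simp: add_eq_0_iff)
  have "1 + u \<noteq> 0"
  proof
    assume "1 + u = 0"
    then have "v * (1 + v) ^ n = 0" using root \<open>1 \<le> n\<close> by (simp add: dn zero_power)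
    then show False using \<open>v \<noteq> 0\<close> \<open>1 + v \<noteq> 0\<close> by simp
  qed
  show ?thesis
  proof (cases "1 + of_real p * u = 0")
    case True \<comment> \<open>u = -1/p is a pole of psi: RePsi p d u = \<infinity>\<close>
    then show ?thesis
      using \<open>u \<noteq> 0\<close> \<open>v \<noteq> 0\<close> \<open>1 + of_real p * v \<noteq> 0\<close> by (simp add: RePsi_def eln_def)
  next
    case False
    have Xv: "(cmod v)\<^sup>2 = 1 / (real n + 1)\<^sup>2" using v by (simp add: d_eq power_divide)
    have "1 - cmod v \<le> cmod (1 + v)" using norm_diff_ineq[of 1 v] by simp
    then have "n / (real n + 1) \<le> cmod (1 + v)" using v by (simp add: d_eq field_simps)
    then have Yv: "(n / (real n + 1))\<^sup>2 \<le> (cmod (1 + v))\<^sup>2" by (simp add: power_mono)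
    have Xu: "1 / (real n + 1)\<^sup>2 < (cmod u)\<^sup>2"
      using less unfolding Xv[symmetric] by (simp add: power_strict_mono)
    have "cmod u * cmod (1 + u) ^ n = cmod v * cmod (1 + v) ^ n"
      using arg_cong[OF root, of cmod] by (simp add: dn norm_mult norm_power)
    then have "(cmod u)\<^sup>2 * ((cmod (1 + u))\<^sup>2) ^ n = (cmod v)\<^sup>2 * ((cmod (1 + v))\<^sup>2) ^ n"
      by (metis power_mult_distrib power_even_eq power_mult)
    then have level: "(cmod u)\<^sup>2 * ((cmod (1 + u))\<^sup>2) ^ n
        = 1 / (real n + 1)\<^sup>2 * ((cmod (1 + v))\<^sup>2) ^ n"
      unfolding Xv .
    have "p / (real n + 1 - p) * ln ((cmod u)\<^sup>2) + ln ((cmod (1 + of_real p * u))\<^sup>2)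
        < p / (real n + 1 - p) * ln ((cmod v)\<^sup>2) + ln ((cmod (1 + of_real p * v))\<^sup>2)"
      unfolding norm_one_plus_of_real_mult_sq Xv
      by (rule level_curve_comparison[OF p \<open>1 \<le> n\<close> Yv Xu _ level])
        (use \<open>1 + u \<noteq> 0\<close> False in \<open>simp_all add: norm_one_plus_of_real_mult_sq[symmetric]\<close>)
    then have "p / (d - p) * ln (cmod u) + ln (cmod (1 + of_real p * u))
        < p / (d - p) * ln (cmod v) + ln (cmod (1 + of_real p * v))"
      using \<open>u \<noteq> 0\<close> \<open>v \<noteq> 0\<close> False \<open>1 + of_real p * v \<noteq> 0\<close>
      by (simp add: ln_realpow d_eq mult.left_commute[of p 2])
    then show ?thesis
      using \<open>u \<noteq> 0\<close> \<open>v \<noteq> 0\<close> False \<open>1 + of_real p * v \<noteq> 0\<close> by (simp add: RePsi_finite)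
  qed
qed

theorem proposition5p9:
  fixes p :: real and d :: nat
  assumes "0 < p" and "p < 1" and "2 \<le> d"
  shows "\<exists>\<Gamma>0 :: real \<Rightarrow> complex.
           simple_path \<Gamma>0 \<and> pathfinish \<Gamma>0 = pathstart \<Gamma>0 \<and>
           0 \<notin> path_image \<Gamma>0 \<and> winding_number \<Gamma>0 0 \<noteq> 0 \<and>
           complex_of_real (- 1 / real d) \<in> path_image \<Gamma>0 \<and>
           (\<forall>v \<in> path_image \<Gamma>0.
              \<forall>u \<in># nontriv_roots d v -
                     (if v = complex_of_real (- 1 / real d) then {# v #} else {#}).
                 RePsi p d v < RePsi p d u)"
proof (intro exI conjI ballI)
  let ?\<Gamma> = "circlepath 0 (1 / real d)"
  have "0 < 1 / real d" using assms(3) by simp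
  then have image: "path_image ?\<Gamma> = sphere 0 (1 / real d)" by simp
  show "simple_path ?\<Gamma>" "pathfinish ?\<Gamma> = pathstart ?\<Gamma>" "0 \<notin> path_image ?\<Gamma>"
    using \<open>0 < 1 / real d\<close> by (simp_all add: simple_path_circlepath image)
  show "winding_number ?\<Gamma> 0 \<noteq> 0"
    using winding_number_circlepath_centre[OF \<open>0 < 1 / real d\<close>] by simp
  show "complex_of_real (- 1 / real d) \<in> path_image ?\<Gamma>"
    by (simp add: image norm_divide)
  fix v u
  assume "v \<in> path_image ?\<Gamma>"
    and u: "u \<in># nontriv_roots d v - (if v = complex_of_real (- 1 / real d) then {#v#} else {#})"
  then have v: "cmod v = 1 / real d" by (simp add: image)
  then have "v \<noteq> -1" using assms(3) by auto
  note root = in_nontriv_roots_diffD[OF assms(3) this u]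
  have "cmod v < cmod u"
    using norm_less_nontrivial_root[OF assms(3) _ root(2,1)] v by simp
  then show "RePsi p d v < RePsi p d u"
    using RePsi_less_of_norm_less[OF assms v root(2)] by blast
qed

end
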